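(* Let $x$ be a sequence of length $n$, let $i\in\{1,\ldots,n-1\}$, $y=\tau(x,i)$, and let $r,\ell$ be as defined in the context. Let $R=\{i+2,\ldots,i+r-1\}$ and $L=\{i-\ell+1,\ldots,i-1\}$. (1) If $x[i]<x[i+1]$: (a) for every $j\in R$, $\overrightarrow{PD}_y[j]\in\{\overrightarrow{PD}_x[j],\overrightarrow{PD}_x[j]-1\}$; (b) for every $j\in L$, $\overleftarrow{PD}_y[j]\in\{\overleftarrow{PD}_x[j],\overleftarrow{PD}_x[j]+1\}$. (2) If $x[i]>x[i+1]$: (a) for every $j\in R$, $\overrightarrow{PD}_y[j]\in\{\overrightarrow{PD}_x[j],\overrightarrow{PD}_x[j]+1\}$; (b) for every $j\in L$, $\overleftarrow{PD}_y[j]\in\{\overleftarrow{PD}_x[j],\overleftarrow{PD}_x[j]-1\}$.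
   Context: Sequences are finite sequences of pairwise distinct integers indexed from $1$. For $1\le i\le n-1$, $\tau(x,i)$ is obtained from $x$ by exchanging $x[i]$ and $x[i+1]$. The parent-distance table of $x$ is $\overrightarrow{PD}_x[k]=k-\max\{j<k : x[j]<x[k]\}$ if such $j$ exists and $0$ otherwise; the reverse parent-distance table is $\overleftarrow{PD}_x[k]=\min\{j : k<j\le n,\ x[j]<x[k]\}-k$ if such $j$ exists and $0$ otherwise. Notation: $\overrightarrow{a_x}=\overrightarrow{PD}_x[i]$, $\overrightarrow{b_x}=\overrightarrow{PD}_x[i+1]$, $\overleftarrow{a_x}=\overleftarrow{PD}_x[i+1]$, $\overleftarrow{b_x}=\overleftarrow{PD}_x[i]$. Define $r=\overleftarrow{b_x}$ if $x[i]<x[i+1]$ and $\overleftarrow{b_x}>1$; $r=\overleftarrow{a_x}+1$ if $x[i]>x[i+1]$ and $\overleftarrow{a_x}>0$; $r=n-i+1$ otherwise. Define $\ell=\overrightarrow{a_x}$ if $x[i]<x[i+1]$ and $\overrightarrow{a_x}>0$; $\ell=\overrightarrow{b_x}-1$ if $x[i]>x[i+1]$ and $\overrightarrow{b_x}>1$; $\ell=i$ otherwise. Index ranges $\{a,\ldots,b\}$ with $a>b$ are empty. *)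

theory Defs
  imports Main
begin

(* Sequences are lists of pairwise distinct integers, indexed from 1:
   the k-th entry x[k] is  nth1 x k = x ! (k - 1). *)
definition nth1 :: "int list \<Rightarrow> nat \<Rightarrow> int" where
  "nth1 x k = x ! (k - 1)"

definition tau :: "int list \<Rightarrow> nat \<Rightarrow> int list" where
  "tau x i = x[i - 1 := nth1 x (i + 1), i := nth1 x i]"

(* forward parent-distance table PD_x[k] (arrow to the right) *)
definition fpd :: "int list \<Rightarrow> nat \<Rightarrow> nat" where
  "fpd x k = (if \<exists>j. 1 \<le> j \<and> j < k \<and> nth1 x j < nth1 x k
     then k - Max {j. 1 \<le> j \<and> j < k \<and> nth1 x j < nth1 x k} else 0)"

(* reverse parent-distance table (arrow to the left) *)
definition rpd :: "int list \<Rightarrow> nat \<Rightarrow> nat" where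
  "rpd x k = (if \<exists>j. k < j \<and> j \<le> length x \<and> nth1 x j < nth1 x k
     then Min {j. k < j \<and> j \<le> length x \<and> nth1 x j < nth1 x k} - k else 0)"

definition rr :: "int list \<Rightarrow> nat \<Rightarrow> nat" where
  "rr x i = (if nth1 x i < nth1 x (i+1) \<and> rpd x i > 1 then rpd x i
     else if nth1 x i > nth1 x (i+1) \<and> rpd x (i+1) > 0 then rpd x (i+1) + 1
     else length x - i + 1)"

definition ll :: "int list \<Rightarrow> nat \<Rightarrow> nat" where
  "ll x i = (if nth1 x i < nth1 x (i+1) \<and> fpd x i > 0 then fpd x i
     else if nth1 x i > nth1 x (i+1) \<and> fpd x (i+1) > 1 then fpd x (i+1) - 1
     else i)"

end

theory Submission
  imports Defs "HOL-Combinatorics.Transposition"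
begin

(* Swapping x[i] and x[i+1] permutes positions by the transposition t = (i i+1) and fixes every
   other position j.  So t maps the set of positions left (right) of j holding a value smaller
   than x[j] onto the corresponding set for y, and the parent distance of j is the distance to
   the maximum (minimum) of that set.  If x[i] < x[i+1], the set contains i whenever it contains
   i+1, and then t can only keep its maximum and minimum or raise them by one.  The case
   x[i] > x[i+1] is the ascending case for y, since tau is an involution. *)

lemma Max_transpose_Suc_image:
  fixes S :: "nat set"
  assumes "finite S" "S \<noteq> {}" "a + 1 \<in> S \<Longrightarrow> a \<in> S"
  shows "Max (transpose a (a + 1) ` S) \<in> {Max S, Max S + 1}"
proof -
  let ?t = "transpose a (a + 1)"
  have "Max (?t ` S) = (if Max S = a then a + 1 else Max S)"
  proof (rule Max_eqI)
    show "finite (?t ` S)"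
      using assms(1) by simp
    show "(if Max S = a then a + 1 else Max S) \<in> ?t ` S"
      using assms(3) Max_in[OF assms(1,2)] by (auto simp: in_transpose_image_iff transpose_def)
    show "b \<le> (if Max S = a then a + 1 else Max S)" if "b \<in> ?t ` S" for b
    proof -
      obtain s where "s \<in> S" "b = ?t s"
        using \<open>b \<in> ?t ` S\<close> by blast
      moreover have "Max S \<noteq> a" if "s = a + 1"
        using Max_ge[OF assms(1) \<open>s \<in> S\<close>] that by auto
      ultimately show ?thesis
        using Max_ge[OF assms(1) \<open>s \<in> S\<close>] by (auto simp: transpose_def)
    qed
  qed
  then show ?thesis by simp
qed

lemma Min_transpose_Suc_image:
  fixes S :: "nat set"
  assumes "finite S" "S \<noteq> {}" "a + 1 \<in> S \<Longrightarrow> a \<in> S"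
  shows "Min (transpose a (a + 1) ` S) \<in> {Min S, Min S + 1}"
proof -
  let ?t = "transpose a (a + 1)"
  have "Min S \<noteq> a + 1"
    using assms(3) Min_in[OF assms(1,2)] Min_le[OF assms(1), of a] by auto
  have "Min (?t ` S) = (if Min S = a \<and> a + 1 \<notin> S then a + 1 else Min S)"
  proof (rule Min_eqI)
    show "finite (?t ` S)"
      using assms(1) by simp
    show "(if Min S = a \<and> a + 1 \<notin> S then a + 1 else Min S) \<in> ?t ` S"
      using \<open>Min S \<noteq> a + 1\<close> Min_in[OF assms(1,2)]
      by (auto simp: in_transpose_image_iff transpose_def)
    show "(if Min S = a \<and> a + 1 \<notin> S then a + 1 else Min S) \<le> b" if "b \<in> ?t ` S" for b
    proof -
      obtain s where "s \<in> S" "b = ?t s"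
        using \<open>b \<in> ?t ` S\<close> by blast
      then show ?thesis
        using Min_le[OF assms(1) \<open>s \<in> S\<close>] \<open>Min S \<noteq> a + 1\<close> by (auto simp: transpose_def)
    qed
  qed
  then show ?thesis by simp
qed

lemma transpose_Suc_less_iff:
  fixes i j k :: nat
  assumes "1 \<le> i" "j \<noteq> i + 1"
  shows "1 \<le> transpose i (i + 1) k \<and> transpose i (i + 1) k < j \<longleftrightarrow> 1 \<le> k \<and> k < j"
  using assms by (auto simp: transpose_def)

lemma transpose_Suc_greater_iff:
  fixes i j k n :: nat
  assumes "i + 1 \<le> n" "j \<noteq> i"
  shows "j < transpose i (i + 1) k \<and> transpose i (i + 1) k \<le> n \<longleftrightarrow> j < k \<and> k \<le> n"
  using assms by (auto simp: transpose_def)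

definition smaller_before :: "int list \<Rightarrow> nat \<Rightarrow> nat set" where
  "smaller_before x k = {j. 1 \<le> j \<and> j < k \<and> nth1 x j < nth1 x k}"

definition smaller_after :: "int list \<Rightarrow> nat \<Rightarrow> nat set" where
  "smaller_after x k = {j. k < j \<and> j \<le> length x \<and> nth1 x j < nth1 x k}"

lemma finite_smaller_before: "finite (smaller_before x k)"
  by (rule finite_subset[of _ "{..<k}"]) (auto simp: smaller_before_def)

lemma finite_smaller_after: "finite (smaller_after x k)"
  by (rule finite_subset[of _ "{..length x}"]) (auto simp: smaller_after_def)

lemma Max_smaller_before_less: "smaller_before x k \<noteq> {} \<Longrightarrow> Max (smaller_before x k) < k"
  using Max_in[OF finite_smaller_before] by (auto simp: smaller_before_def)

lemma Min_smaller_after_greater: "smaller_after x k \<noteq> {} \<Longrightarrow> k < Min (smaller_after x k)"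
  using Min_in[OF finite_smaller_after] by (auto simp: smaller_after_def)

lemma fpd_eq_Max:
  "fpd x k = (if smaller_before x k = {} then 0 else k - Max (smaller_before x k))"
  unfolding fpd_def smaller_before_def by auto

lemma rpd_eq_Min:
  "rpd x k = (if smaller_after x k = {} then 0 else Min (smaller_after x k) - k)"
  unfolding rpd_def smaller_after_def by auto

lemma fpd_le: "fpd x k \<le> k"
  unfolding fpd_def by auto

lemma length_tau [simp]: "length (tau x i) = length x"
  by (simp add: tau_def)

lemma nth1_tau:
  assumes "1 \<le> i" "i < length x" "1 \<le> k"
  shows "nth1 (tau x i) k = nth1 x (transpose i (i + 1) k)"
  using assms by (auto simp: tau_def nth1_def transpose_def nth_list_update)

lemma tau_tau:
  assumes "1 \<le> i" "i < length x"
  shows "tau (tau x i) i = x"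
proof (rule nth_equalityI)
  fix k assume "k < length (tau (tau x i) i)"
  then show "tau (tau x i) i ! k = x ! k"
    using nth1_tau[of i "tau x i" "k + 1"] nth1_tau[of i x] assms
    by (auto simp: nth1_def transpose_def)
qed simp

lemma smaller_before_tau:
  assumes "1 \<le> i" "i < length x" "1 \<le> j" "j \<noteq> i" "j \<noteq> i + 1"
  shows "smaller_before (tau x i) j = transpose i (i + 1) ` smaller_before x j"
proof (rule set_eqI)
  fix k
  have "nth1 (tau x i) j = nth1 x j"
    using assms by (simp add: nth1_tau)
  then show "k \<in> smaller_before (tau x i) j \<longleftrightarrow> k \<in> transpose i (i + 1) ` smaller_before x j"
    unfolding in_transpose_image_iff smaller_before_def mem_Collect_eq
    using transpose_Suc_less_iff[OF assms(1,5), of k] nth1_tau[OF assms(1,2), of k] by auto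
qed

lemma smaller_after_tau:
  assumes "1 \<le> i" "i < length x" "1 \<le> j" "j \<noteq> i" "j \<noteq> i + 1"
  shows "smaller_after (tau x i) j = transpose i (i + 1) ` smaller_after x j"
proof (rule set_eqI)
  fix k
  have "nth1 (tau x i) j = nth1 x j"
    using assms by (simp add: nth1_tau)
  moreover have "i + 1 \<le> length x"
    using assms(2) by simp
  ultimately show "k \<in> smaller_after (tau x i) j \<longleftrightarrow> k \<in> transpose i (i + 1) ` smaller_after x j"
    unfolding in_transpose_image_iff smaller_after_def mem_Collect_eq length_tau
    using transpose_Suc_greater_iff[OF _ assms(4), of "length x" k] nth1_tau[OF assms(1,2), of k]
      assms(3) by auto
qed

lemma fpd_tau_ascent:
  assumes i: "1 \<le> i" "i < length x" and j: "1 \<le> j" "j \<noteq> i" "j \<noteq> i + 1"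
    and "nth1 x i < nth1 x (i + 1)"
  shows "int (fpd (tau x i) j) \<in> {int (fpd x j), int (fpd x j) - 1}"
proof (cases "smaller_before x j = {}")
  case True
  then show ?thesis
    using smaller_before_tau[OF i j] by (simp add: fpd_eq_Max)
next
  case False
  let ?S = "smaller_before x j" and ?S' = "smaller_before (tau x i) j"
  have "i + 1 \<in> ?S \<Longrightarrow> i \<in> ?S"
    using i \<open>nth1 x i < nth1 x (i + 1)\<close> by (auto simp: smaller_before_def)
  then have "Max ?S' \<in> {Max ?S, Max ?S + 1}"
    using Max_transpose_Suc_image[OF finite_smaller_before False] smaller_before_tau[OF i j] by simp
  moreover have "?S' \<noteq> {}"
    using False smaller_before_tau[OF i j] by simp
  ultimately show ?thesis
    using False Max_smaller_before_less[of "tau x i" j] by (auto simp: fpd_eq_Max)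
qed

lemma rpd_tau_ascent:
  assumes i: "1 \<le> i" "i < length x" and j: "1 \<le> j" "j \<noteq> i" "j \<noteq> i + 1"
    and "nth1 x i < nth1 x (i + 1)"
  shows "int (rpd (tau x i) j) \<in> {int (rpd x j), int (rpd x j) + 1}"
proof (cases "smaller_after x j = {}")
  case True
  then show ?thesis
    using smaller_after_tau[OF i j] by (simp add: rpd_eq_Min)
next
  case False
  let ?S = "smaller_after x j" and ?S' = "smaller_after (tau x i) j"
  have "i + 1 \<in> ?S \<Longrightarrow> i \<in> ?S"
    using i j \<open>nth1 x i < nth1 x (i + 1)\<close> by (auto simp: smaller_after_def)
  then have "Min ?S' \<in> {Min ?S, Min ?S + 1}"
    using Min_transpose_Suc_image[OF finite_smaller_after False] smaller_after_tau[OF i j] by simp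
  moreover have "?S' \<noteq> {}"
    using False smaller_after_tau[OF i j] by simp
  ultimately show ?thesis
    using False Min_smaller_after_greater[of x j] by (auto simp: rpd_eq_Min)
qed

lemma nth1_tau_swapped:
  assumes "1 \<le> i" "i < length x"
  shows "nth1 (tau x i) i = nth1 x (i + 1)" "nth1 (tau x i) (i + 1) = nth1 x i"
  using assms by (simp_all add: nth1_tau)

lemma fpd_tau_descent:
  assumes i: "1 \<le> i" "i < length x" and j: "1 \<le> j" "j \<noteq> i" "j \<noteq> i + 1"
    and "nth1 x (i + 1) < nth1 x i"
  shows "int (fpd (tau x i) j) \<in> {int (fpd x j), int (fpd x j) + 1}"
proof -
  have "nth1 (tau x i) i < nth1 (tau x i) (i + 1)"
    unfolding nth1_tau_swapped[OF i] by fact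
  then have "int (fpd (tau (tau x i) i) j) \<in> {int (fpd (tau x i) j), int (fpd (tau x i) j) - 1}"
    using fpd_tau_ascent[of i "tau x i" j] i j by simp
  then show ?thesis
    unfolding tau_tau[OF i] by auto
qed

lemma rpd_tau_descent:
  assumes i: "1 \<le> i" "i < length x" and j: "1 \<le> j" "j \<noteq> i" "j \<noteq> i + 1"
    and "nth1 x (i + 1) < nth1 x i"
  shows "int (rpd (tau x i) j) \<in> {int (rpd x j), int (rpd x j) - 1}"
proof -
  have "nth1 (tau x i) i < nth1 (tau x i) (i + 1)"
    unfolding nth1_tau_swapped[OF i] by fact
  then have "int (rpd (tau (tau x i) i) j) \<in> {int (rpd (tau x i) j), int (rpd (tau x i) j) + 1}"
    using rpd_tau_ascent[of i "tau x i" j] i j by simp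
  then show ?thesis
    unfolding tau_tau[OF i] by auto
qed

lemma ll_le: "ll x i \<le> i"
  using fpd_le[of x i] fpd_le[of x "i + 1"] unfolding ll_def by auto

theorem lemma5:
  fixes x :: "int list" and i :: nat
  assumes "distinct x"
    and "1 \<le> i" and "i \<le> length x - 1"
  defines "y \<equiv> tau x i"
    and "R \<equiv> {i + 2 .. i + rr x i - 1}"
    and "L \<equiv> {int i - int (ll x i) + 1 .. int i - 1}"
  shows "(nth1 x i < nth1 x (i+1) \<longrightarrow>
            (\<forall>j\<in>R. int (fpd y j) \<in> {int (fpd x j), int (fpd x j) - 1}) \<and>
            (\<forall>j. j \<in> L \<longrightarrow> int (rpd y (nat j)) \<in> {int (rpd x (nat j)), int (rpd x (nat j)) + 1}))
       \<and> (nth1 x i > nth1 x (i+1) \<longrightarrow>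
            (\<forall>j\<in>R. int (fpd y j) \<in> {int (fpd x j), int (fpd x j) + 1}) \<and>
            (\<forall>j. j \<in> L \<longrightarrow> int (rpd y (nat j)) \<in> {int (rpd x (nat j)), int (rpd x (nat j)) - 1}))"
proof -
  have i: "1 \<le> i" "i < length x"
    using assms(2,3) by auto
  have R: "1 \<le> j" "j \<noteq> i" "j \<noteq> i + 1" if "j \<in> R" for j
    using that unfolding R_def by auto
  have L: "1 \<le> nat j" "nat j \<noteq> i" "nat j \<noteq> i + 1" if "j \<in> L" for j
    using that ll_le[of x i] unfolding L_def by auto
  show ?thesis
    unfolding y_def
    using fpd_tau_ascent[OF i R] rpd_tau_ascent[OF i L] fpd_tau_descent[OF i R] rpd_tau_descent[OF i L]
    by blast
qed

end
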